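(* Let $n\ge2$, $A\in\mathbb{R}^{n\times m}$, $B\in\mathbb{R}^{m\times n}$, and let $C$ be a cycle of the DSR$^{[2]}$ graph $G^{[2]}_{A,B}$. (i) If $C$ is twisted, then $\pi(C)$ is an s-walk if and only if $C$ is an s-cycle. (ii) If $C$ is direct, $\pi(C)=\{W',W''\}$, and both $W'$ and $W''$ are s-walks, then $C$ is an s-cycle.
   Context: DSR graphs: for $A\in\mathbb{R}^{n\times m}$, $B\in\mathbb{R}^{m\times n}$, $G_{A,B}$ is the signed, labelled bipartite digraph with S-vertices $S_1,\dots,S_n$ and R-vertices $R_1,\dots,R_m$, an arc $R_j\to S_i$ of sign $\mathrm{sign}(A_{ij})$ iff $A_{ij}\ne0$, an arc $S_i\to R_j$ of sign $\mathrm{sign}(B_{ji})$ iff $B_{ji}\ne0$, with antiparallel arcs of equal sign merged into an undirected edge. An edge arising from $A_{ij}\ne0$ (R-to-S or undirected) has label $|A_{ij}|$; an edge with only S-to-R orientation has label $\infty$. Walks traverse edges consistently with orientation (empty walks allowed); a cycle is a nonempty closed walk with no repeated vertex except first$=$last. A closed walk $(e_1,\dots,e_{2r})$ ($r\ge0$) is an s-walk if all its labels are finite and $\prod_{i=1}^r l(e_{2i-1})=\prod_{i=1}^r l(e_{2i})$; an s-cycle is a cycle which is an s-walk. DSR$^{[2]}$ graph: $\overline{\mathbf L}^A\in\mathbb{R}^{\binom n2\times mn}$ has rows indexed by $(i,j)$, $i<j$, columns by $(k,l)$, $1\le k\le m$, $1\le l\le n$, entries $A_{jk}$ if $l=i$,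 $-A_{ik}$ if $l=j$, $0$ otherwise; $\underline{\mathbf L}^B\in\mathbb{R}^{mn\times\binom n2}$ has $(k,l),(i,j)$ entry $B_{kj}$ if $l=i$, $-B_{ki}$ if $l=j$, $0$ otherwise. $G^{[2]}_{A,B}:=G_{\overline{\mathbf L}^A,\underline{\mathbf L}^B}$, with S-vertices $ij=ji$ and R-vertices $k^l$; an edge $(ij,k^l)$ exists only if $l\in\{i,j\}$. The projection $\pi$ sends an edge $(ij,k^j)$ to the edge $(S_i,R_k)$ of $G_{A,B}$, which has the same direction and label. Direct/twisted and $\pi(C)$: let $C$ have S-vertex sequence $a_1b_1,\dots,a_{T+1}b_{T+1}=a_1b_1$, and write the segment from $a_rb_r$ to $a_{r+1}b_{r+1}$ as $(a_rb_r,k^l,a_{r+1}b_{r+1})$ with $l$ the common index; its projection is a length-2 walk from $S_x$ to $S_y$, where $x$ is the element of $\{a_r,b_r\}$ other than $l$ and $y$ that of $\{a_{r+1},b_{r+1}\}$ other than $l$. Starting from empty walks at $S_{a_1}$ and $S_{b_1}$, for $r=1,\dots,T$ append the projected segment to whichever current walk ends at $S_x$. If the final walks $W',W''$ are both closed, $C$ is direct and $\pi(C)=\{W',W''\}$; otherwise $C$ is twisted and $\pi(C)=W'\sqcup W''$ is the closed walk obtained by traversing $W'$ and $W''$ in succession. *)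

theory Defs
  imports Main "HOL-Library.Extended_Real"
begin

text \<open>A DSR graph is given by a set SS of S-vertices, a set RR of R-vertices,
  a function a (a s r plays the role of A_{s r}: arc R_r -> S_s) and a function
  b (b r s plays the role of B_{r s}: arc S_s -> R_r).\<close>

datatype ('s,'r) vert = SV (sv: 's) | RV (rv: 'r)

text \<open>Kinds of edges: undirected (merged antiparallel arcs of equal sign),
  R-to-S arc only, S-to-R arc only.\<close>
datatype ekind = Und | ArcRS | ArcSR

text \<open>An edge joins an S-vertex and an R-vertex and has a kind
  (several edges may join the same pair of vertices).\<close>
type_synonym ('s,'r) edge = "'s \<times> 'r \<times> ekind"

type_synonym ('s,'r) walk = "('s,'r) vert list \<times> ('s,'r) edge list"

definition dsr_edge ::
  "'s set \<Rightarrow> 'r set \<Rightarrow> ('s \<Rightarrow> 'r \<Rightarrow> real) \<Rightarrow> ('r \<Rightarrow> 's \<Rightarrow> real) \<Rightarrow> ('s,'r) edge \<Rightarrow> bool" where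
  "dsr_edge SS RR a b e = (case e of (s, r, kd) \<Rightarrow> s \<in> SS \<and> r \<in> RR \<and>
     (case kd of
        Und \<Rightarrow> a s r \<noteq> 0 \<and> b r s \<noteq> 0 \<and> sgn (a s r) = sgn (b r s)
      | ArcRS \<Rightarrow> a s r \<noteq> 0 \<and> \<not> (b r s \<noteq> 0 \<and> sgn (b r s) = sgn (a s r))
      | ArcSR \<Rightarrow> b r s \<noteq> 0 \<and> \<not> (a s r \<noteq> 0 \<and> sgn (a s r) = sgn (b r s))))"

definition dsr_label :: "('s \<Rightarrow> 'r \<Rightarrow> real) \<Rightarrow> ('s,'r) edge \<Rightarrow> ereal" where
  "dsr_label a e = (case e of (s, r, kd) \<Rightarrow>
     (if kd = ArcSR then \<infinity> else ereal \<bar>a s r\<bar>))"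

definition traverses :: "('s,'r) edge \<Rightarrow> ('s,'r) vert \<Rightarrow> ('s,'r) vert \<Rightarrow> bool" where
  "traverses e u v = (case e of (s, r, kd) \<Rightarrow>
     (u = SV s \<and> v = RV r \<and> kd \<noteq> ArcRS) \<or> (u = RV r \<and> v = SV s \<and> kd \<noteq> ArcSR))"

definition in_vertices :: "'s set \<Rightarrow> 'r set \<Rightarrow> ('s,'r) vert \<Rightarrow> bool" where
  "in_vertices SS RR v = (case v of SV s \<Rightarrow> s \<in> SS | RV r \<Rightarrow> r \<in> RR)"

definition is_walk ::
  "'s set \<Rightarrow> 'r set \<Rightarrow> ('s \<Rightarrow> 'r \<Rightarrow> real) \<Rightarrow> ('r \<Rightarrow> 's \<Rightarrow> real) \<Rightarrow> ('s,'r) walk \<Rightarrow> bool" where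
  "is_walk SS RR a b W = (length (fst W) = Suc (length (snd W)) \<and>
     (\<forall>v \<in> set (fst W). in_vertices SS RR v) \<and>
     (\<forall>i < length (snd W). dsr_edge SS RR a b (snd W ! i) \<and>
        traverses (snd W ! i) (fst W ! i) (fst W ! Suc i)))"

definition closed_walk :: "('s,'r) walk \<Rightarrow> bool" where
  "closed_walk W = (hd (fst W) = last (fst W))"

definition is_cycle ::
  "'s set \<Rightarrow> 'r set \<Rightarrow> ('s \<Rightarrow> 'r \<Rightarrow> real) \<Rightarrow> ('r \<Rightarrow> 's \<Rightarrow> real) \<Rightarrow> ('s,'r) walk \<Rightarrow> bool" where
  "is_cycle SS RR a b W = (is_walk SS RR a b W \<and> snd W \<noteq> [] \<and> closed_walk W \<and>
     distinct (butlast (fst W)))"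

text \<open>s-walk: closed walk (e_1,...,e_{2r}) with all labels finite and
  prod l(e_{2i-1}) = prod l(e_{2i}); with 0-based list indices, the edges at even
  positions versus those at odd positions.\<close>
definition s_walk :: "('s \<Rightarrow> 'r \<Rightarrow> real) \<Rightarrow> ('s,'r) walk \<Rightarrow> bool" where
  "s_walk a W = (closed_walk W \<and> (\<forall>e \<in> set (snd W). dsr_label a e \<noteq> \<infinity>) \<and>
     (\<Prod>i \<in> {i. i < length (snd W) \<and> even i}. dsr_label a (snd W ! i)) =
     (\<Prod>i \<in> {i. i < length (snd W) \<and> odd i}. dsr_label a (snd W ! i)))"

definition s_cycle ::
  "'s set \<Rightarrow> 'r set \<Rightarrow> ('s \<Rightarrow> 'r \<Rightarrow> real) \<Rightarrow> ('r \<Rightarrow> 's \<Rightarrow> real) \<Rightarrow> ('s,'r) walk \<Rightarrow> bool" where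
  "s_cycle SS RR a b W = (is_cycle SS RR a b W \<and> s_walk a W)"

text \<open>Matrices are functions nat => nat => real, indices 1-based.
  G_{A,B}: S-vertices 1..n, R-vertices 1..m, a i k = A i k, b k i = B k i.\<close>

definition S1 :: "nat \<Rightarrow> nat set" where "S1 n = {1..n}"
definition R1 :: "nat \<Rightarrow> nat set" where "R1 m = {1..m}"

text \<open>DSR^[2]: S-vertex ij = ji represented by the pair (i,j) with i < j;
  R-vertex k^l represented by (k,l).\<close>
definition S2 :: "nat \<Rightarrow> (nat \<times> nat) set" where
  "S2 n = {(i, j). 1 \<le> i \<and> i < j \<and> j \<le> n}"
definition R2 :: "nat \<Rightarrow> nat \<Rightarrow> (nat \<times> nat) set" where
  "R2 n m = {1..m} \<times> {1..n}"

definition LA :: "(nat \<Rightarrow> nat \<Rightarrow> real) \<Rightarrow> nat \<times> nat \<Rightarrow> nat \<times> nat \<Rightarrow> real" where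
  "LA A ij kl = (case ij of (i, j) \<Rightarrow> case kl of (k, l) \<Rightarrow>
     (if l = i then A j k else if l = j then - A i k else 0))"

definition LB :: "(nat \<Rightarrow> nat \<Rightarrow> real) \<Rightarrow> nat \<times> nat \<Rightarrow> nat \<times> nat \<Rightarrow> real" where
  "LB B kl ij = (case kl of (k, l) \<Rightarrow> case ij of (i, j) \<Rightarrow>
     (if l = i then B k j else if l = j then - B k i else 0))"

definition other :: "nat \<Rightarrow> nat \<times> nat \<Rightarrow> nat" where
  "other l pq = (case pq of (p, q) \<Rightarrow> if l = q then p else q)"

definition proj_edge :: "(nat \<times> nat, nat \<times> nat) edge \<Rightarrow> (nat, nat) edge" where
  "proj_edge e = (case e of (ij, (k, l), kd) \<Rightarrow> (other l ij, k, kd))"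

text \<open>Rotating a closed walk starting at an R-vertex by one step so that it
  starts at an S-vertex (the paper writes a cycle via its S-vertex sequence).\<close>
definition norm_cycle :: "('s,'r) walk \<Rightarrow> ('s,'r) walk" where
  "norm_cycle W = (case hd (fst W) of
      SV _ \<Rightarrow> W
    | RV _ \<Rightarrow> (tl (fst W) @ [hd (tl (fst W))], tl (snd W) @ [hd (snd W)]))"

definition append_seg :: "(nat, nat) walk \<Rightarrow> (nat, nat) walk \<Rightarrow> (nat, nat) walk" where
  "append_seg W seg = (fst W @ fst seg, snd W @ snd seg)"

text \<open>Processing the r-th segment (0-based) of C (assumed to start at an S-vertex).\<close>
definition proj_step ::
  "(nat \<times> nat, nat \<times> nat) walk \<Rightarrow> nat \<Rightarrow> (nat, nat) walk \<times> (nat, nat) walk \<Rightarrow> (nat, nat) walk \<times> (nat, nat) walk" where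
  "proj_step C r WW = (let vs = fst C; es = snd C;
       k = fst (rv (vs ! (2*r+1))); l = snd (rv (vs ! (2*r+1)));
       x = other l (sv (vs ! (2*r))); y = other l (sv (vs ! (2*r+2)));
       seg = ([RV k, SV y], [proj_edge (es ! (2*r)), proj_edge (es ! (2*r+1))])
     in if last (fst (fst WW)) = SV x then (append_seg (fst WW) seg, snd WW)
        else (fst WW, append_seg (snd WW) seg))"

definition proj_pair :: "(nat \<times> nat, nat \<times> nat) walk \<Rightarrow> (nat, nat) walk \<times> (nat, nat) walk" where
  "proj_pair C = (let C' = norm_cycle C; a1 = fst (sv (hd (fst C'))); b1 = snd (sv (hd (fst C')));
       T = length (snd C') div 2
     in fold (proj_step C') [0..<T] (([SV a1], []), ([SV b1], [])))"

definition is_direct :: "(nat \<times> nat, nat \<times> nat) walk \<Rightarrow> bool" where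
  "is_direct C = (closed_walk (fst (proj_pair C)) \<and> closed_walk (snd (proj_pair C)))"

definition is_twisted :: "(nat \<times> nat, nat \<times> nat) walk \<Rightarrow> bool" where
  "is_twisted C = (\<not> is_direct C)"

text \<open>For a twisted cycle, pi(C) = W' \<squnion> W'': traverse W' then W''.\<close>
definition proj_twisted :: "(nat \<times> nat, nat \<times> nat) walk \<Rightarrow> (nat, nat) walk" where
  "proj_twisted C = (let W1 = fst (proj_pair C); W2 = snd (proj_pair C)
     in (fst W1 @ tl (fst W2), snd W1 @ snd W2))"

end

theory Submission
  imports Defs
begin

(*
  Each segment (a_r b_r, k^l, a_(r+1) b_(r+1)) of C projects to a two-edge walk carrying the same
  two labels, and the projection appends it to whichever of W', W'' ends at the right vertex.
  Both walks have even length throughout, so the first label of the segment lands at an even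
  position and the second at an odd one: the label sequence of C is a shuffle of those of W' and
  W'' by blocks of two.  Hence the even-position and odd-position label products of C factor
  through W' and W'', which gives (ii), and also (i), because W' \<squnion> W'' is W' followed by W''.
  The two walks always end at the two indices of the current S-vertex of C, so at the end they
  end at a_1, b_1 in one order or the other; this is the direct/twisted dichotomy.
*)

definition even_prod :: "'a::comm_monoid_mult list \<Rightarrow> 'a" where
  "even_prod xs = (\<Prod>i \<in> {i. i < length xs \<and> even i}. xs ! i)"

definition odd_prod :: "'a::comm_monoid_mult list \<Rightarrow> 'a" where
  "odd_prod xs = (\<Prod>i \<in> {i. i < length xs \<and> odd i}. xs ! i)"

lemma even_prod_Nil [simp]: "even_prod [] = 1"
  and odd_prod_Nil [simp]: "odd_prod [] = 1"
  by (simp_all add: even_prod_def odd_prod_def)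

lemma even_prod_Cons [simp]: "even_prod (x # xs) = x * odd_prod xs"
proof -
  have "{i. i < length (x # xs) \<and> even i} = insert 0 (Suc ` {j. j < length xs \<and> odd j})"
    by (auto simp: image_iff elim: oddE) (metis Suc_less_eq even_Suc not0_implies_Suc)
  then show ?thesis
    by (simp add: even_prod_def odd_prod_def prod.reindex image_iff)
qed

lemma odd_prod_Cons [simp]: "odd_prod (x # xs) = even_prod xs"
proof -
  have "{i. i < length (x # xs) \<and> odd i} = Suc ` {j. j < length xs \<and> even j}"
    by (auto simp: image_iff) (metis Suc_less_eq even_Suc odd_pos Suc_pred)
  then show ?thesis
    by (simp add: even_prod_def odd_prod_def prod.reindex)
qed

lemma even_prod_append [simp]:
    "even_prod (xs @ ys) = even_prod xs * (if even (length xs) then even_prod ys else odd_prod ys)"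
  and odd_prod_append [simp]:
    "odd_prod (xs @ ys) = odd_prod xs * (if even (length xs) then odd_prod ys else even_prod ys)"
  by (induction xs) (simp_all add: mult.assoc)

lemma even_prod_rotate1: "even (length xs) \<Longrightarrow> even_prod (rotate1 xs) = odd_prod xs"
  and odd_prod_rotate1: "even (length xs) \<Longrightarrow> odd_prod (rotate1 xs) = even_prod xs"
  by (cases xs; simp add: mult.commute)+

inductive pair_shuffle :: "'a list \<Rightarrow> 'a list \<Rightarrow> 'a list \<Rightarrow> bool" where
  Nil: "pair_shuffle [] [] []"
| left: "pair_shuffle xs ys zs \<Longrightarrow> pair_shuffle (xs @ [u, v]) ys (zs @ [u, v])"
| right: "pair_shuffle xs ys zs \<Longrightarrow> pair_shuffle xs (ys @ [u, v]) (zs @ [u, v])"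

lemma pair_shuffle_even_length:
  "pair_shuffle xs ys zs \<Longrightarrow> even (length xs) \<and> even (length ys) \<and> even (length zs)"
  by (induction rule: pair_shuffle.induct) auto

lemma pair_shuffle_set: "pair_shuffle xs ys zs \<Longrightarrow> set zs = set xs \<union> set ys"
  by (induction rule: pair_shuffle.induct) auto

lemma pair_shuffle_prods:
  fixes xs ys zs :: "'a::comm_monoid_mult list"
  assumes "pair_shuffle xs ys zs"
  shows "even_prod zs = even_prod xs * even_prod ys \<and> odd_prod zs = odd_prod xs * odd_prod ys"
  using assms
proof (induction rule: pair_shuffle.induct)
  case (left xs ys zs u v)
  then show ?case using pair_shuffle_even_length[OF left.hyps] by (simp add: mult_ac)
next
  case (right xs ys zs u v)
  then show ?case using pair_shuffle_even_length[OF right.hyps] by (simp add: mult_ac)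
qed simp

definition s_balanced :: "ereal list \<Rightarrow> bool" where
  "s_balanced xs \<longleftrightarrow> \<infinity> \<notin> set xs \<and> even_prod xs = odd_prod xs"

lemma s_balanced_rotate1: "even (length xs) \<Longrightarrow> s_balanced (rotate1 xs) \<longleftrightarrow> s_balanced xs"
  by (auto simp: s_balanced_def even_prod_rotate1 odd_prod_rotate1)

lemma s_balanced_pair_shuffle:
  "pair_shuffle xs ys zs \<Longrightarrow> s_balanced xs \<Longrightarrow> s_balanced ys \<Longrightarrow> s_balanced zs"
  by (simp add: s_balanced_def pair_shuffle_set pair_shuffle_prods)

lemma s_balanced_append_iff_pair_shuffle:
  "pair_shuffle xs ys zs \<Longrightarrow> s_balanced (xs @ ys) \<longleftrightarrow> s_balanced zs"
  by (simp add: s_balanced_def pair_shuffle_set pair_shuffle_prods pair_shuffle_even_length)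

definition edge_labels :: "('s \<Rightarrow> 'r \<Rightarrow> real) \<Rightarrow> ('s, 'r) walk \<Rightarrow> ereal list" where
  "edge_labels a W = map (dsr_label a) (snd W)"

lemma s_walk_iff_s_balanced: "s_walk a W \<longleftrightarrow> closed_walk W \<and> s_balanced (edge_labels a W)"
  unfolding s_walk_def s_balanced_def edge_labels_def even_prod_def odd_prod_def
  by (force intro!: prod.cong)

definition is_S_vert :: "('s, 'r) vert \<Rightarrow> bool" where
  "is_S_vert v = (case v of SV _ \<Rightarrow> True | RV _ \<Rightarrow> False)"

lemma traverses_is_S_vert: "traverses e u v \<Longrightarrow> is_S_vert v \<longleftrightarrow> \<not> is_S_vert u"
  by (cases e) (auto simp: traverses_def is_S_vert_def)

lemma is_walk_length: "is_walk SS RR a b W \<Longrightarrow> length (fst W) = Suc (length (snd W))"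
  by (simp add: is_walk_def)

lemma is_walk_nth_edge: "is_walk SS RR a b W \<Longrightarrow> i < length (snd W) \<Longrightarrow>
    dsr_edge SS RR a b (snd W ! i) \<and> traverses (snd W ! i) (fst W ! i) (fst W ! Suc i)"
  by (simp add: is_walk_def)

lemma is_walk_nth_vertex: "is_walk SS RR a b W \<Longrightarrow> i \<le> length (snd W) \<Longrightarrow>
    in_vertices SS RR (fst W ! i)"
  by (simp add: is_walk_def)

lemma is_walk_is_S_vert_nth:
  assumes "is_walk SS RR a b W" and "i \<le> length (snd W)"
  shows "is_S_vert (fst W ! i) \<longleftrightarrow> (even i \<longleftrightarrow> is_S_vert (fst W ! 0))"
  using assms(2)
proof (induction i)
  case (Suc i)
  have "traverses (snd W ! i) (fst W ! i) (fst W ! Suc i)"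
    using is_walk_nth_edge[OF assms(1), of i] Suc.prems by simp
  then show ?case using traverses_is_S_vert Suc by fastforce
qed simp

lemma closed_walk_nth_length:
  assumes "is_walk SS RR a b W" and "closed_walk W"
  shows "fst W ! length (snd W) = fst W ! 0"
proof -
  have "fst W \<noteq> []" using is_walk_length[OF assms(1)] by auto
  then show ?thesis
    using assms(2) is_walk_length[OF assms(1)] by (simp add: closed_walk_def hd_conv_nth last_conv_nth)
qed

lemma closed_walk_even_length: "is_walk SS RR a b W \<Longrightarrow> closed_walk W \<Longrightarrow> even (length (snd W))"
  using is_walk_is_S_vert_nth[of SS RR a b W "length (snd W)"] closed_walk_nth_length by fastforce

lemma is_walk_rotate1:
  assumes W: "is_walk SS RR a b (vs, es)" and cl: "closed_walk (vs, es)" and "es \<noteq> []"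
  shows "is_walk SS RR a b (tl vs @ [vs ! 1], rotate1 es)"
    and "closed_walk (tl vs @ [vs ! 1], rotate1 es)"
proof -
  obtain e es' where es: "es = e # es'" using \<open>es \<noteq> []\<close> by (cases es) auto
  obtain v vs' where vs: "vs = v # vs'" and len: "length vs' = Suc (length es')"
    using is_walk_length[OF W] es by (cases vs) auto
  have last_vs': "vs' ! length es' = v"
    using closed_walk_nth_length[OF W cl] es vs by simp
  have "dsr_edge SS RR a b (rotate1 es ! i) \<and>
      traverses (rotate1 es ! i) ((tl vs @ [vs ! 1]) ! i) ((tl vs @ [vs ! 1]) ! Suc i)"
    if i: "i < length es" for i
  proof (cases "i < length es'")
    case True
    then show ?thesis using is_walk_nth_edge[OF W, of "Suc i"] len vs es
      by (simp add: nth_append)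
  next
    case False
    then have "i = length es'" using i es by simp
    then show ?thesis using is_walk_nth_edge[OF W, of 0] len last_vs' vs es
      by (simp add: nth_append)
  qed
  moreover have "set (tl vs @ [vs ! 1]) \<subseteq> set vs" using len vs by auto
  ultimately show "is_walk SS RR a b (tl vs @ [vs ! 1], rotate1 es)"
    using W len vs es by (auto simp: is_walk_def)
  show "closed_walk (tl vs @ [vs ! 1], rotate1 es)"
    using len vs by (cases vs') (simp_all add: closed_walk_def)
qed

lemma is_cycle_norm_cycle:
  assumes "is_cycle SS RR a b C"
  shows "is_walk SS RR a b (norm_cycle C)" and "closed_walk (norm_cycle C)"
    and "is_S_vert (fst (norm_cycle C) ! 0)"
    and "snd (norm_cycle C) = snd C \<or> snd (norm_cycle C) = rotate1 (snd C)"
proof -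
  obtain vs es where C: "C = (vs, es)" by fastforce
  have W: "is_walk SS RR a b (vs, es)" and cl: "closed_walk (vs, es)" and "es \<noteq> []"
    using assms C by (auto simp: is_cycle_def)
  have len: "length vs = Suc (length es)" using is_walk_length[OF W] by simp
  then have hd_vs: "hd vs = vs ! 0" by (cases vs) auto
  have "is_walk SS RR a b (norm_cycle C) \<and> closed_walk (norm_cycle C) \<and>
      is_S_vert (fst (norm_cycle C) ! 0) \<and>
      (snd (norm_cycle C) = snd C \<or> snd (norm_cycle C) = rotate1 (snd C))"
  proof (cases "is_S_vert (vs ! 0)")
    case True
    then have "norm_cycle C = C"
      by (auto simp: norm_cycle_def C hd_vs is_S_vert_def split: vert.split)
    then show ?thesis using W cl True C by simp
  next
    case False
    have "norm_cycle C = (tl vs @ [vs ! 1], rotate1 es)"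
      using False \<open>es \<noteq> []\<close> len
      by (cases vs; cases "tl vs")
        (auto simp: norm_cycle_def C is_S_vert_def rotate1_hd_tl split: vert.split)
    moreover have "is_S_vert (vs ! 1)"
      using is_walk_is_S_vert_nth[OF W, of 1] False \<open>es \<noteq> []\<close> by (simp add: Suc_le_eq)
    ultimately show ?thesis
      using is_walk_rotate1[OF W cl \<open>es \<noteq> []\<close>] len \<open>es \<noteq> []\<close> C
      by (cases vs) (simp_all add: nth_append)
  qed
  then show "is_walk SS RR a b (norm_cycle C)" and "closed_walk (norm_cycle C)"
    and "is_S_vert (fst (norm_cycle C) ! 0)"
    and "snd (norm_cycle C) = snd C \<or> snd (norm_cycle C) = rotate1 (snd C)"
    by blast+
qed

lemma s_cycle_iff_s_balanced_norm_cycle: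
  assumes "is_cycle SS RR a b C"
  shows "s_cycle SS RR a b C \<longleftrightarrow> s_balanced (edge_labels a (norm_cycle C))"
proof -
  have "closed_walk C" and "even (length (edge_labels a C))"
    using assms closed_walk_even_length[of SS RR a b C] by (auto simp: is_cycle_def edge_labels_def)
  then show ?thesis
    using assms is_cycle_norm_cycle(4)[OF assms] s_balanced_rotate1
    by (auto simp: s_cycle_def s_walk_iff_s_balanced edge_labels_def rotate1_map[symmetric])
qed

lemma traverses_SV_RV: "traverses e (SV s) (RV r) \<Longrightarrow> \<exists>kd. e = (s, r, kd)"
  and traverses_RV_SV: "traverses e (RV r) (SV s) \<Longrightarrow> \<exists>kd. e = (s, r, kd)"
  by (cases e; auto simp: traverses_def)+

lemma dsr2_edge_ends:
  "dsr_edge (S2 n) (R2 n m) (LA A) (LB B) ((p, q), (k, l), kd) \<Longrightarrow> p < q \<and> l \<in> {p, q}"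
  by (auto simp: dsr_edge_def LA_def LB_def S2_def split: ekind.splits if_splits)

lemma dsr_label_proj_edge:
  assumes "dsr_edge (S2 n) (R2 n m) (LA A) (LB B) e"
  shows "dsr_label A (proj_edge e) = dsr_label (LA A) e"
proof -
  obtain p q k l kd where e: "e = ((p, q), (k, l), kd)" by (metis prod.collapse)
  then show ?thesis using dsr2_edge_ends[of n m A B p q k l kd] assms
    by (auto simp: dsr_label_def proj_edge_def LA_def other_def)
qed

lemma other_complement:
  assumes "l \<in> {p, q}" and "p \<noteq> q"
  shows "{other l (p, q), l} = {p, q}" and "other l (p, q) \<noteq> l"
  using assms by (auto simp: other_def)

lemma doubleton_SV_other:
  assumes "{u, w} = {SV p, SV q}" and "l \<in> {p, q}" and "p \<noteq> q"
  shows "u = SV (other l (p, q)) \<and> w = SV l \<or> u = SV l \<and> w = SV (other l (p, q))"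
proof -
  have "{u, w} = SV ` {other l (p, q), l}" using assms other_complement(1)[OF assms(2,3)] by simp
  then show ?thesis by (auto simp: doubleton_eq_iff)
qed

lemma dsr2_walk_segment:
  assumes W: "is_walk (S2 n) (R2 n m) (LA A) (LB B) D" and S0: "is_S_vert (fst D ! 0)"
    and t: "2 * t + 2 \<le> length (snd D)"
  obtains p q k l p' q' where "fst D ! (2 * t) = SV (p, q)" "fst D ! (2 * t + 1) = RV (k, l)"
    "fst D ! (2 * t + 2) = SV (p', q')" "p < q" "l \<in> {p, q}" "p' < q'" "l \<in> {p', q'}"
proof -
  have "is_S_vert (fst D ! (2 * t))" "\<not> is_S_vert (fst D ! (2 * t + 1))"
    "is_S_vert (fst D ! (2 * t + 2))"
    using is_walk_is_S_vert_nth[OF W] S0 t by simp_all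
  then obtain p q k l p' q' where v: "fst D ! (2 * t) = SV (p, q)" "fst D ! (2 * t + 1) = RV (k, l)"
    "fst D ! (2 * t + 2) = SV (p', q')"
    by (auto simp: is_S_vert_def split: vert.splits)
  have "dsr_edge (S2 n) (R2 n m) (LA A) (LB B) (snd D ! (2 * t)) \<and>
      traverses (snd D ! (2 * t)) (SV (p, q)) (RV (k, l))"
    and "dsr_edge (S2 n) (R2 n m) (LA A) (LB B) (snd D ! (2 * t + 1)) \<and>
      traverses (snd D ! (2 * t + 1)) (RV (k, l)) (SV (p', q'))"
    using is_walk_nth_edge[OF W, of "2 * t"] is_walk_nth_edge[OF W, of "2 * t + 1"] t v by simp_all
  then have "p < q \<and> l \<in> {p, q}" and "p' < q' \<and> l \<in> {p', q'}"
    using dsr2_edge_ends traverses_SV_RV traverses_RV_SV by metis+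
  then show thesis using that v by blast
qed

lemma take_edge_labels_Suc:
  assumes W: "is_walk (S2 n) (R2 n m) (LA A) (LB B) D" and t: "2 * t + 2 \<le> length (snd D)"
  shows "take (2 * Suc t) (edge_labels (LA A) D) =
    take (2 * t) (edge_labels (LA A) D) @
      map (dsr_label A \<circ> proj_edge) [snd D ! (2 * t), snd D ! (2 * t + 1)]"
  using dsr_label_proj_edge[of n m A B] t
    is_walk_nth_edge[OF W, of "2 * t"] is_walk_nth_edge[OF W, of "2 * t + 1"]
  by (simp add: edge_labels_def take_Suc_conv_app_nth)

fun proj_invariant :: "(nat \<Rightarrow> nat \<Rightarrow> real) \<Rightarrow> (nat \<times> nat, nat \<times> nat) walk \<Rightarrow> nat \<Rightarrow> nat \<Rightarrow> nat \<Rightarrow>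
    (nat, nat) walk \<times> (nat, nat) walk \<Rightarrow> bool" where
  "proj_invariant A D a b t (W1, W2) \<longleftrightarrow>
     fst W1 \<noteq> [] \<and> hd (fst W1) = SV a \<and> fst W2 \<noteq> [] \<and> hd (fst W2) = SV b \<and>
     (\<exists>p q. fst D ! (2 * t) = SV (p, q) \<and> {last (fst W1), last (fst W2)} = {SV p, SV q}) \<and>
     pair_shuffle (edge_labels A W1) (edge_labels A W2) (take (2 * t) (edge_labels (LA A) D))"

lemma proj_step_invariant:
  assumes W: "is_walk (S2 n) (R2 n m) (LA A) (LB B) D" and S0: "is_S_vert (fst D ! 0)"
    and t: "2 * t + 2 \<le> length (snd D)"
    and inv: "proj_invariant A D a b t (W1, W2)"
  shows "proj_invariant A D a b (Suc t) (proj_step D t (W1, W2))"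
proof -
  obtain p q k l p' q' where v: "fst D ! (2 * t) = SV (p, q)" "fst D ! (2 * t + 1) = RV (k, l)"
    "fst D ! (2 * t + 2) = SV (p', q')" and l: "p < q" "l \<in> {p, q}" "p' < q'" "l \<in> {p', q'}"
    using dsr2_walk_segment[OF W S0 t] by metis
  define L where "L = edge_labels (LA A) D"
  define x where "x = other l (p, q)"
  define y where "y = other l (p', q')"
  define seg where
    "seg = ([RV k, SV y], [proj_edge (snd D ! (2 * t)), proj_edge (snd D ! (2 * t + 1))])"
  have step: "proj_step D t (W1, W2) =
      (if last (fst W1) = SV x then (append_seg W1 seg, W2) else (W1, append_seg W2 seg))"
    using v by (simp add: proj_step_def Let_def seg_def x_def y_def)
  define ls where "ls = map (dsr_label A \<circ> proj_edge) [snd D ! (2 * t), snd D ! (2 * t + 1)]"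
  have labels_seg: "edge_labels A (append_seg W seg) = edge_labels A W @ ls" for W
    by (simp add: append_seg_def edge_labels_def seg_def ls_def)
  have take_L: "take (2 * Suc t) L = take (2 * t) L @ ls"
    using take_edge_labels_Suc[OF W t] by (simp add: L_def ls_def)
  have ends_seg: "fst (append_seg W seg) \<noteq> [] \<and> last (fst (append_seg W seg)) = SV y \<and>
      (fst W \<noteq> [] \<longrightarrow> hd (fst (append_seg W seg)) = hd (fst W))" for W
    by (simp add: append_seg_def seg_def)
  have shuffle: "pair_shuffle (edge_labels A W1) (edge_labels A W2) (take (2 * t) L)"
    using inv by (simp add: L_def)
  obtain p0 q0 where "fst D ! (2 * t) = SV (p0, q0)"
    and "{last (fst W1), last (fst W2)} = {SV p0, SV q0}"
    using inv by auto
  with v(1) have "{last (fst W1), last (fst W2)} = {SV p, SV q}" by simp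
  from doubleton_SV_other[OF this l(2)] l(1)
  have lasts: "last (fst W1) = SV x \<and> last (fst W2) = SV l \<or>
      last (fst W1) = SV l \<and> last (fst W2) = SV x"
    unfolding x_def by blast
  have "x \<noteq> l" using other_complement(2)[OF l(2)] l(1) by (simp add: x_def)
  have "{y, l} = {p', q'}" using other_complement(1)[OF l(4)] l(3) by (simp add: y_def)
  then have new_ends: "{SV y, SV l} = {SV p', SV q'}" by (metis image_empty image_insert)
  have v': "fst D ! (2 * Suc t) = SV (p', q')" using v(3) by simp
  from lasts show ?thesis
  proof (elim disjE conjE)
    assume "last (fst W1) = SV x" "last (fst W2) = SV l"
    moreover have "pair_shuffle (edge_labels A (append_seg W1 seg)) (edge_labels A W2)
        (take (2 * Suc t) L)"
      unfolding labels_seg take_L ls_def list.map by (rule pair_shuffle.left[OF shuffle])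
    ultimately show ?thesis using inv step ends_seg[of W1] new_ends v' by (simp add: L_def)
  next
    assume "last (fst W1) = SV l" "last (fst W2) = SV x"
    moreover have "pair_shuffle (edge_labels A W1) (edge_labels A (append_seg W2 seg))
        (take (2 * Suc t) L)"
      unfolding labels_seg take_L ls_def list.map by (rule pair_shuffle.right[OF shuffle])
    ultimately show ?thesis using inv step ends_seg[of W2] new_ends v' \<open>x \<noteq> l\<close>
      by (simp add: L_def insert_commute)
  qed
qed

lemma fold_proj_step_invariant:
  assumes W: "is_walk (S2 n) (R2 n m) (LA A) (LB B) D" and D0: "fst D ! 0 = SV (a, b)"
  shows "2 * t \<le> length (snd D) \<Longrightarrow>
    proj_invariant A D a b t (fold (proj_step D) [0..<t] (([SV a], []), ([SV b], [])))"
proof (induction t)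
  case 0
  then show ?case using D0 by (auto simp: edge_labels_def intro: pair_shuffle.Nil)
next
  case (Suc t)
  obtain W1 W2 where WW: "fold (proj_step D) [0..<t] (([SV a], []), ([SV b], [])) = (W1, W2)"
    by (metis prod.collapse)
  have "is_S_vert (fst D ! 0)" using D0 by (simp add: is_S_vert_def)
  from proj_step_invariant[OF W this _ Suc.IH[unfolded WW]] Suc.prems WW
  show ?case by simp
qed

lemma proj_pair_invariant:
  assumes C: "is_cycle (S2 n) (R2 n m) (LA A) (LB B) C" and WW: "proj_pair C = (W1, W2)"
  obtains a b where "a \<noteq> b"
    and "fst W1 \<noteq> []" "hd (fst W1) = SV a" "fst W2 \<noteq> []" "hd (fst W2) = SV b"
    and "{last (fst W1), last (fst W2)} = {SV a, SV b}"
    and "pair_shuffle (edge_labels A W1) (edge_labels A W2) (edge_labels (LA A) (norm_cycle C))"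
proof -
  define D where "D = norm_cycle C"
  have W: "is_walk (S2 n) (R2 n m) (LA A) (LB B) D" and cl: "closed_walk D"
    and S0: "is_S_vert (fst D ! 0)"
    using is_cycle_norm_cycle[OF C] by (simp_all add: D_def)
  then obtain a b where D0: "fst D ! 0 = SV (a, b)"
    by (auto simp: is_S_vert_def split: vert.splits)
  have "a \<noteq> b" using is_walk_nth_vertex[OF W, of 0] D0 by (simp add: in_vertices_def S2_def)
  define T where "T = length (snd D) div 2"
  have T: "2 * T = length (snd D)" using closed_walk_even_length[OF W cl] by (simp add: T_def)
  have hd_D: "hd (fst D) = fst D ! 0" using is_walk_length[OF W] by (cases "fst D") auto
  have "proj_pair C = fold (proj_step D) [0..<T] (([SV a], []), ([SV b], []))"
    by (simp add: proj_pair_def Let_def D_def[symmetric] T_def hd_D D0)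
  then have "proj_invariant A D a b T (W1, W2)"
    using fold_proj_step_invariant[OF W D0, of T] T WW by simp
  moreover have "fst D ! (2 * T) = SV (a, b)" using closed_walk_nth_length[OF W cl] D0 T by simp
  moreover have "take (2 * T) (edge_labels (LA A) D) = edge_labels (LA A) D"
    using T by (simp add: edge_labels_def)
  ultimately show thesis using that \<open>a \<noteq> b\<close> by (auto simp: D_def)
qed

lemma closed_walk_join:
  assumes "fst W1 \<noteq> []" "fst W2 \<noteq> []" "last (fst W1) = hd (fst W2)"
    "last (fst W2) = hd (fst W1)" "hd (fst W2) \<noteq> last (fst W2)"
  shows "closed_walk (fst W1 @ tl (fst W2), snd W1 @ snd W2)"
  using assms by (cases "fst W2") (auto simp: closed_walk_def split: if_splits)

theorem proposition5p4:
  fixes n m :: nat and A B :: "nat \<Rightarrow> nat \<Rightarrow> real"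
    and C :: "(nat \<times> nat, nat \<times> nat) walk"
  assumes "n \<ge> 2"
    and "is_cycle (S2 n) (R2 n m) (LA A) (LB B) C"
  shows "(is_twisted C \<longrightarrow>
            (s_walk A (proj_twisted C) \<longleftrightarrow> s_cycle (S2 n) (R2 n m) (LA A) (LB B) C))
       \<and> (is_direct C \<and> s_walk A (fst (proj_pair C)) \<and> s_walk A (snd (proj_pair C))
            \<longrightarrow> s_cycle (S2 n) (R2 n m) (LA A) (LB B) C)"
proof -
  obtain W1 W2 where WW: "proj_pair C = (W1, W2)" by (metis prod.collapse)
  obtain a b where "a \<noteq> b" and ne: "fst W1 \<noteq> []" "fst W2 \<noteq> []"
    and hds: "hd (fst W1) = SV a" "hd (fst W2) = SV b"
    and lasts: "{last (fst W1), last (fst W2)} = {SV a, SV b}"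
    and shuffle: "pair_shuffle (edge_labels A W1) (edge_labels A W2) (edge_labels (LA A) (norm_cycle C))"
    using proj_pair_invariant[OF assms(2) WW] by metis
  note s_cycle_iff = s_cycle_iff_s_balanced_norm_cycle[OF assms(2)]
  have "s_walk A (proj_twisted C) \<longleftrightarrow> s_cycle (S2 n) (R2 n m) (LA A) (LB B) C" if "is_twisted C"
  proof -
    have "last (fst W1) = SV b" "last (fst W2) = SV a"
      using that lasts hds \<open>a \<noteq> b\<close> WW
      by (auto simp: is_twisted_def is_direct_def closed_walk_def doubleton_eq_iff)
    then have "closed_walk (proj_twisted C)"
      using closed_walk_join[OF ne] hds \<open>a \<noteq> b\<close> WW by (simp add: proj_twisted_def)
    then show ?thesis
      using s_balanced_append_iff_pair_shuffle[OF shuffle] WW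
      by (simp add: s_walk_iff_s_balanced s_cycle_iff proj_twisted_def edge_labels_def)
  qed
  moreover have "s_cycle (S2 n) (R2 n m) (LA A) (LB B) C"
    if "s_walk A W1" "s_walk A W2"
    using that s_balanced_pair_shuffle[OF shuffle] by (simp add: s_walk_iff_s_balanced s_cycle_iff)
  ultimately show ?thesis using WW by auto
qed

end
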